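(* Let $X=(X_0,X_1,\dots)$ be a Markov chain on $[0,\infty)$ with transition kernel $T(\cdot\mid x)$ such that $\int_0^\infty|y-x|^3T(dy\mid x)<\infty$ for all $x\ge0$, and let $\mu_k(x)=\int_0^\infty(y-x)^kT(dy\mid x)$ for $k=1,2,3$. Assume $\mu_2(x)>0$ for all sufficiently large $x$. Assume there is a function $\psi_1$ such that for all sufficiently large $x$, $\mu_1(x)\le\frac{\mu_2(x)}{2x}[1+\psi_1(x)]$, and $\lim_{x\to\infty}(\log x)\psi_1(x)=0$. Assume also $\lim_{x\to\infty}\frac{\log x}{x}\frac{\mu_3(x)}{\mu_2(x)}=0$. Then the function $f_0(x)=\log(\log(e+x))$, $x\ge0$, is superharmonic on $[m,\infty)$ for all $m$ large enough, i.e. there is $m$ such that $\int_0^\infty f_0(y)T(dy\mid x)\le f_0(x)$ for all $x\ge m$. *)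

theory Defs
  imports "HOL-Probability.Probability"
begin

definition transition_kernel_nonneg :: "(real \<Rightarrow> real measure) \<Rightarrow> bool" where
  "transition_kernel_nonneg T \<longleftrightarrow>
     (\<forall>x\<ge>0. prob_space (T x) \<and> sets (T x) = sets borel \<and> (AE y in T x. 0 \<le> y))"

definition mu :: "(real \<Rightarrow> real measure) \<Rightarrow> nat \<Rightarrow> real \<Rightarrow> real" where
  "mu T k x = (\<integral>y. (y - x) ^ k \<partial>T x)"

definition f0 :: "real \<Rightarrow> real" where
  "f0 x = ln (ln (exp 1 + x))"

end

theory Submission
  imports Defs "HOL-Real_Asymp.Real_Asymp"
begin

(* Write g = ln o ln, so that f0 x = g (e + x). The fourth derivative of g is negative on (1, inf),
   hence g lies below its cubic Taylor polynomial at any point u > 1. Integrating this bound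
   against T x shows that the drift of f0 at x is at most g' mu1 + g'' mu2 / 2 + g''' mu3 / 6.
   Inserting the hypothesis on mu1, this is mu2 / (2 u^2 L^2) * (delta x - 1) with u = e + x,
   L = ln u, where the defect delta x tends to 0 because of the hypotheses on psi1 and mu3 / mu2;
   so the drift is nonpositive for large x. *)

fun lnln_deriv :: "nat \<Rightarrow> real \<Rightarrow> real" where
  "lnln_deriv 0 u = ln (ln u)"
| "lnln_deriv (Suc 0) u = 1 / (u * ln u)"
| "lnln_deriv (Suc (Suc 0)) u = - (ln u + 1) / (u\<^sup>2 * (ln u)\<^sup>2)"
| "lnln_deriv (Suc (Suc (Suc 0))) u = (2 * (ln u)\<^sup>2 + 3 * ln u + 2) / (u ^ 3 * ln u ^ 3)"
| "lnln_deriv (Suc (Suc (Suc (Suc 0)))) u =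
     - (6 * ln u ^ 3 + 11 * (ln u)\<^sup>2 + 12 * ln u + 6) / (u ^ 4 * ln u ^ 4)"
| "lnln_deriv _ u = 0"

lemma lnln_deriv_has_real_derivative:
  assumes "m < 4" and "u > 1"
  shows "(lnln_deriv m has_real_derivative lnln_deriv (Suc m) u) (at u)"
proof -
  have "u > 0" and "ln u > 0" using \<open>u > 1\<close> by auto
  consider "m = 0" | "m = 1" | "m = 2" | "m = 3" using \<open>m < 4\<close> by linarith
  then show ?thesis
  proof cases
    case 1
    have "lnln_deriv 0 = (\<lambda>u. ln (ln u))" by (simp add: fun_eq_iff)
    with 1 show ?thesis using \<open>u > 0\<close> \<open>ln u > 0\<close>
      by (auto intro!: derivative_eq_intros simp: field_simps)
  next
    case 2
    have "lnln_deriv 1 = (\<lambda>u. 1 / (u * ln u))" by (simp add: fun_eq_iff)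
    with 2 show ?thesis using \<open>u > 0\<close> \<open>ln u > 0\<close>
      by (auto intro!: derivative_eq_intros simp: field_simps power2_eq_square eval_nat_numeral)
  next
    case 3
    have "lnln_deriv 2 = (\<lambda>u. - (ln u + 1) / (u\<^sup>2 * (ln u)\<^sup>2))"
      by (simp add: fun_eq_iff eval_nat_numeral)
    with 3 show ?thesis using \<open>u > 0\<close> \<open>ln u > 0\<close>
      by (auto intro!: derivative_eq_intros simp: field_simps eval_nat_numeral)
  next
    case 4
    have "lnln_deriv 3 = (\<lambda>u. (2 * (ln u)\<^sup>2 + 3 * ln u + 2) / (u ^ 3 * ln u ^ 3))"
      by (simp add: fun_eq_iff eval_nat_numeral)
    with 4 show ?thesis using \<open>u > 0\<close> \<open>ln u > 0\<close>
      by (auto intro!: derivative_eq_intros simp: field_simps eval_nat_numeral)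
  qed
qed

lemma lnln_deriv_4_nonpos:
  assumes "u > 1"
  shows "lnln_deriv 4 u \<le> 0"
proof -
  have "ln u > 0" using assms by simp
  then have "0 \<le> 6 * ln u ^ 3 + 11 * (ln u)\<^sup>2 + 12 * ln u + 6" by simp
  with assms show ?thesis by (simp add: eval_nat_numeral divide_nonpos_pos del: minus_add_distrib)
qed

lemma lnln_le_cubic_Taylor:
  fixes u v :: real
  assumes "u > 1" and "v > 1"
  shows "ln (ln v) \<le> ln (ln u) + lnln_deriv 1 u * (v - u) + lnln_deriv 2 u / 2 * (v - u)\<^sup>2
                       + lnln_deriv 3 u / 6 * (v - u) ^ 3"
proof (cases "v = u")
  case True
  then show ?thesis by simp
next
  case False
  have "lnln_deriv 0 = (\<lambda>u. ln (ln u))" by (simp add: fun_eq_iff)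
  moreover have "\<forall>m t. m < 4 \<and> min u v \<le> t \<and> t \<le> max u v \<longrightarrow>
      (lnln_deriv m has_real_derivative lnln_deriv (Suc m) t) (at t)"
    using assms by (auto intro!: lnln_deriv_has_real_derivative)
  ultimately obtain t where t: "if v < u then v < t \<and> t < u else u < t \<and> t < v"
    and taylor: "ln (ln v) = (\<Sum>m<4. lnln_deriv m u / fact m * (v - u) ^ m)
                             + lnln_deriv 4 t / fact 4 * (v - u) ^ 4"
    using Taylor[of 4 lnln_deriv "\<lambda>u. ln (ln u)" "min u v" "max u v" u v] False by auto
  have "t > 1" using t assms by (auto split: if_splits)
  then have "lnln_deriv 4 t / fact 4 * (v - u) ^ 4 \<le> 0"
    by (intro mult_nonpos_nonneg divide_nonpos_pos lnln_deriv_4_nonpos) auto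
  with taylor show ?thesis by (simp add: eval_nat_numeral)
qed

lemma f0_le_cubic_Taylor:
  fixes x y :: real
  assumes "x \<ge> 0" and "y \<ge> 0"
  shows "f0 y \<le> f0 x + lnln_deriv 1 (exp 1 + x) * (y - x) + lnln_deriv 2 (exp 1 + x) / 2 * (y - x)\<^sup>2
                 + lnln_deriv 3 (exp 1 + x) / 6 * (y - x) ^ 3"
proof -
  have "exp 1 + x > 1" and "exp 1 + y > 1" using assms one_less_exp_iff[of 1] by linarith+
  from lnln_le_cubic_Taylor[OF this] show ?thesis by (simp add: f0_def)
qed

lemma f0_nonneg:
  assumes "x \<ge> 0"
  shows "0 \<le> f0 x"
proof -
  have "ln (exp 1) \<le> ln (exp 1 + x)" using assms by (subst ln_le_cancel_iff) (auto simp: add_pos_nonneg)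
  then show ?thesis by (simp add: f0_def)
qed

lemma integrable_power_if_integrable_abs_power:
  fixes g :: "'a \<Rightarrow> real"
  assumes "finite_measure M" and "g \<in> borel_measurable M"
    and "integrable M (\<lambda>y. \<bar>g y\<bar> ^ n)" and "k \<le> n"
  shows "integrable M (\<lambda>y. g y ^ k)"
proof (rule Bochner_Integration.integrable_bound)
  show "integrable M (\<lambda>y. 1 + \<bar>g y\<bar> ^ n)"
    using assms(1,3) by (simp add: finite_measure.integrable_const)
  show "(\<lambda>y. g y ^ k) \<in> borel_measurable M" using assms(2) by measurable
  have "\<bar>d ^ k\<bar> \<le> 1 + \<bar>d\<bar> ^ n" for d :: real
  proof (cases "\<bar>d\<bar> \<le> 1")
    case True
    then have "\<bar>d\<bar> ^ k \<le> 1" by (simp add: power_le_one)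
    then show ?thesis by (simp add: power_abs add_increasing2)
  next
    case False
    then have "\<bar>d\<bar> ^ k \<le> \<bar>d\<bar> ^ n" using \<open>k \<le> n\<close> by (intro power_increasing) auto
    then show ?thesis by (simp add: power_abs)
  qed
  then show "AE y in M. norm (g y ^ k) \<le> norm (1 + \<bar>g y\<bar> ^ n)" by simp
qed

(* f is not assumed integrable: nonnegativity covers the case where its integral defaults to 0. *)
lemma integral_le_cubic_moments:
  fixes M :: "real measure" and f :: "real \<Rightarrow> real"
  assumes "prob_space M" and "sets M = sets borel"
    and "integrable M (\<lambda>y. \<bar>y - x\<bar> ^ 3)"
    and "AE y in M. 0 \<le> f y"
    and "AE y in M. f y \<le> c0 + c1 * (y - x) + c2 * (y - x)\<^sup>2 + c3 * (y - x) ^ 3"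
  shows "(\<integral>y. f y \<partial>M) \<le> c0 + c1 * (\<integral>y. y - x \<partial>M) + c2 * (\<integral>y. (y - x)\<^sup>2 \<partial>M)
                           + c3 * (\<integral>y. (y - x) ^ 3 \<partial>M)"
proof -
  interpret prob_space M by fact
  have "(\<lambda>y. y - x) \<in> borel_measurable M"
    unfolding measurable_cong_sets[OF assms(2) refl] by simp
  then have moments: "integrable M (\<lambda>y. (y - x) ^ k)" if "k \<le> 3" for k
    using integrable_power_if_integrable_abs_power[OF finite_measure_axioms _ assms(3) that] by simp
  have "AE y in M. 0 \<le> c0 + c1 * (y - x) + c2 * (y - x)\<^sup>2 + c3 * (y - x) ^ 3"
    using assms(4,5) by eventually_elim simp
  with assms(5) moments[of 1] moments[of 2] moments[of 3]
  have "(\<integral>y. f y \<partial>M) \<le> (\<integral>y. c0 + c1 * (y - x) + c2 * (y - x)\<^sup>2 + c3 * (y - x) ^ 3 \<partial>M)"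
    by (intro integral_mono_AE') auto
  also have "\<dots> = c0 + c1 * (\<integral>y. y - x \<partial>M) + c2 * (\<integral>y. (y - x)\<^sup>2 \<partial>M) + c3 * (\<integral>y. (y - x) ^ 3 \<partial>M)"
    using moments[of 1] moments[of 2] moments[of 3] prob_space by simp
  finally show ?thesis .
qed

lemma integral_f0_le_cubic_moments:
  assumes "transition_kernel_nonneg T" and "x \<ge> 0"
    and "integrable (T x) (\<lambda>y. \<bar>y - x\<bar> ^ 3)"
  shows "(\<integral>y. f0 y \<partial>T x) \<le> f0 x + lnln_deriv 1 (exp 1 + x) * mu T 1 x
           + lnln_deriv 2 (exp 1 + x) / 2 * mu T 2 x + lnln_deriv 3 (exp 1 + x) / 6 * mu T 3 x"
proof -
  have T: "prob_space (T x)" "sets (T x) = sets borel" "AE y in T x. 0 \<le> y"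
    using assms(1,2) by (auto simp: transition_kernel_nonneg_def)
  have "AE y in T x. 0 \<le> f0 y" using T(3) by eventually_elim (rule f0_nonneg)
  moreover have "AE y in T x. f0 y \<le> f0 x + lnln_deriv 1 (exp 1 + x) * (y - x)
      + lnln_deriv 2 (exp 1 + x) / 2 * (y - x)\<^sup>2 + lnln_deriv 3 (exp 1 + x) / 6 * (y - x) ^ 3"
    using T(3) by eventually_elim (use f0_le_cubic_Taylor assms(2) in auto)
  ultimately have "(\<integral>y. f0 y \<partial>T x) \<le> f0 x + lnln_deriv 1 (exp 1 + x) * (\<integral>y. y - x \<partial>T x)
      + lnln_deriv 2 (exp 1 + x) / 2 * (\<integral>y. (y - x)\<^sup>2 \<partial>T x)
      + lnln_deriv 3 (exp 1 + x) / 6 * (\<integral>y. (y - x) ^ 3 \<partial>T x)"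
    by (rule integral_le_cubic_moments[OF T(1,2) assms(3)])
  then show ?thesis by (simp add: mu_def)
qed

(* This is the delta of the proof idea. With u = e + x and L = ln u, its first two summands are
   L ((1 + p) u / x - 1), from the first- and second-order Taylor terms; the last one comes from
   the third-order term, with r = m3 / m2. *)
definition lnln_drift_defect :: "real \<Rightarrow> real \<Rightarrow> real \<Rightarrow> real" where
  "lnln_drift_defect x p r =
     ln (exp 1 + x) * p * (1 + exp 1 / x) + ln (exp 1 + x) * exp 1 / x
     + r * (2 * (ln (exp 1 + x))\<^sup>2 + 3 * ln (exp 1 + x) + 2) / (3 * (exp 1 + x) * ln (exp 1 + x))"

lemma lnln_drift_defect_tendsto_0:
  fixes \<psi> r :: "real \<Rightarrow> real"
  assumes "((\<lambda>x. ln x * \<psi> x) \<longlongrightarrow> 0) at_top"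
    and "((\<lambda>x. ln x / x * r x) \<longlongrightarrow> 0) at_top"
  shows "((\<lambda>x. lnln_drift_defect x (\<psi> x) (r x)) \<longlongrightarrow> 0) at_top"
proof -
  define A where "A x = ln (exp 1 + x) / ln x * (1 + exp 1 / x)" for x :: real
  define C where "C x = x * (2 * (ln (exp 1 + x))\<^sup>2 + 3 * ln (exp 1 + x) + 2)
                        / (3 * (exp 1 + x) * ln (exp 1 + x) * ln x)" for x :: real
  have "(A \<longlongrightarrow> 1) at_top" unfolding A_def by real_asymp
  moreover have "((\<lambda>x::real. ln (exp 1 + x) * exp 1 / x) \<longlongrightarrow> 0) at_top" by real_asymp
  moreover have "(C \<longlongrightarrow> 2 / 3) at_top" unfolding C_def by real_asymp
  ultimately have "((\<lambda>x. ln x * \<psi> x * A x + ln (exp 1 + x) * exp 1 / x + ln x / x * r x * C x)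
                    \<longlongrightarrow> 0 * 1 + 0 + 0 * (2 / 3)) at_top"
    using assms by (intro tendsto_intros)
  moreover have "eventually (\<lambda>x. ln x * \<psi> x * A x + ln (exp 1 + x) * exp 1 / x + ln x / x * r x * C x
                                 = lnln_drift_defect x (\<psi> x) (r x)) at_top"
    using eventually_gt_at_top[of 1]
    by eventually_elim (simp add: A_def C_def lnln_drift_defect_def)
  ultimately show ?thesis by (simp add: tendsto_cong)
qed

lemma lnln_Taylor_drift_nonpos:
  fixes x m1 m2 m3 p :: real
  assumes "x > 0" and "m2 > 0" and drift: "m1 \<le> m2 / (2 * x) * (1 + p)"
    and defect: "lnln_drift_defect x p (m3 / m2) < 1"
  shows "lnln_deriv 1 (exp 1 + x) * m1 + lnln_deriv 2 (exp 1 + x) / 2 * m2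
         + lnln_deriv 3 (exp 1 + x) / 6 * m3 \<le> 0"
proof -
  define u where "u = exp 1 + x"
  define L where "L = ln u"
  have "u > 1" unfolding u_def using \<open>x > 0\<close> one_less_exp_iff[of 1] by linarith
  then have "u > 0" and "L > 0" unfolding L_def by auto
  have "lnln_deriv 1 u = 1 / (u * L)" by (simp add: L_def)
  then have "lnln_deriv 1 u * m1 \<le> 1 / (u * L) * (m2 / (2 * x) * (1 + p))"
    using drift \<open>u > 0\<close> \<open>L > 0\<close> by (simp only:) (intro mult_left_mono, auto)
  then have "lnln_deriv 1 u * m1 + lnln_deriv 2 u / 2 * m2 + lnln_deriv 3 u / 6 * m3
        \<le> 1 / (u * L) * (m2 / (2 * x) * (1 + p)) + lnln_deriv 2 u / 2 * m2 + lnln_deriv 3 u / 6 * m3"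
    by linarith
  also have "\<dots> = m2 / (2 * u\<^sup>2 * L\<^sup>2) * (lnln_drift_defect x p (m3 / m2) - 1)"
  proof -
    have "exp 1 = u - x" by (simp add: u_def)
    then show ?thesis
      using \<open>x > 0\<close> \<open>m2 > 0\<close> \<open>u > 0\<close> \<open>L > 0\<close>
      by (simp add: lnln_drift_defect_def eval_nat_numeral flip: u_def L_def)
         (simp add: field_simps power2_eq_square power3_eq_cube)
  qed
  also have "\<dots> \<le> 0"
    using \<open>m2 > 0\<close> defect by (intro mult_nonneg_nonpos) auto
  finally show ?thesis by (simp add: u_def)
qed

theorem theorem4p4:
  fixes T :: "real \<Rightarrow> real measure" and \<psi>1 :: "real \<Rightarrow> real"
  assumes kernel: "transition_kernel_nonneg T"
    and moment3: "\<forall>x\<ge>0. integrable (T x) (\<lambda>y. \<bar>y - x\<bar> ^ 3)"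
    and mu2_pos: "eventually (\<lambda>x. mu T 2 x > 0) at_top"
    and drift: "eventually (\<lambda>x. mu T 1 x \<le> mu T 2 x / (2 * x) * (1 + \<psi>1 x)) at_top"
    and psi1_lim: "((\<lambda>x. ln x * \<psi>1 x) \<longlongrightarrow> 0) at_top"
    and mu3_lim: "((\<lambda>x. ln x / x * (mu T 3 x / mu T 2 x)) \<longlongrightarrow> 0) at_top"
  shows "\<exists>m. \<forall>x\<ge>m. (\<integral>y. f0 y \<partial>T x) \<le> f0 x"
proof -
  have "eventually (\<lambda>x. lnln_drift_defect x (\<psi>1 x) (mu T 3 x / mu T 2 x) < 1) at_top"
    using lnln_drift_defect_tendsto_0[OF psi1_lim mu3_lim] by (rule order_tendstoD) simp
  with mu2_pos drift eventually_gt_at_top[of 0]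
  have "eventually (\<lambda>x. (\<integral>y. f0 y \<partial>T x) \<le> f0 x) at_top"
  proof eventually_elim
    case (elim x)
    then have "lnln_deriv 1 (exp 1 + x) * mu T 1 x + lnln_deriv 2 (exp 1 + x) / 2 * mu T 2 x
               + lnln_deriv 3 (exp 1 + x) / 6 * mu T 3 x \<le> 0"
      by (intro lnln_Taylor_drift_nonpos) auto
    with integral_f0_le_cubic_moments[OF kernel, of x] moment3 \<open>x > 0\<close> show ?case by simp
  qed
  then show ?thesis by (simp add: eventually_at_top_linorder)
qed

end
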